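(* Assume the Construction below. Then for every $n\geq 1$ the following hold in $D(0,1/2)\times\mathbb{D}$: (i) $\overline{X_{n+1}}\subset X_n$; more precisely, for every $s'=(s,\sigma)\in\mathcal S_{n+1}$ one has $\overline{X_{n+1,s'}}\subset X^{\mathrm{int}}_{n+1,s,\sigma}\subset X_{n,s}$; (ii) $X_{n+1}$ does not contain the graph of any continuous (in particular of any holomorphic) function defined over $D(a_{n+1},r_{n+1})$, relative to the projection $\pi_0(z,w)=z$ if $n$ is even, and relative to the projection $\pi_1(z,w)=z+\frac{w}{100}$ if $n$ is odd; (iii) for each $s\in\mathcal S_n$ and each $\alpha\in\mathbb{C}$ with $|\alpha|<2\delta_n$, the analytic set $\{P_{n,s}=\alpha\}$ is horizontal in $D(0,1/2)\times\mathbb{D}$, has degree $2^n$ over the $z$-coordinate, and is an unramified covering (of degree $2^n$) over $\{3/8\leq|z|\leq 1/2\}$ relative to $\pi_0$. Moreover, if $s_1\neq s_2$ then $\{P_{n,s_1}=\alpha\}$ and $\{P_{n,s_2}=\alpha\}$ are disjoint.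
   Context: Notation: $D(a,r)$ is the open disk of center $a$ and radius $r$ in $\mathbb{C}$, $\mathbb{D}=D(0,1)$, and $\mathbb{Z}^2$ is identified with the Gaussian integers $\mathbb{Z}+i\mathbb{Z}\subset\mathbb{C}$. A subset of $D(0,1/2)\times\mathbb{D}$ is called horizontal if it is contained in $D(0,1/2)\times D(0,1-\varepsilon)$ for some $\varepsilon>0$. Construction. Let $(a_n)_{n\geq1}$ be a sequence of points of $D(0,1/4)$ such that both subsequences $(a_{2p})$ and $(a_{2p+1})$ are dense in $D(0,1/4)$. Put $A_n(z,w)=z-a_n$ if $n$ is odd and $A_n(z,w)=z+\frac{w}{100}-a_n$ if $n$ is even. Let $(r_n)_{n\geq1}$ be a sequence of positive reals decreasing to $0$ with $r_n\leq 1/10$, and $(m_n)_{n\geq1}$ a sequence of positive integers. Define $\delta_0=1/2$, $\delta_{n+1}=\frac{\delta_n^2 r_{n+1}}{4m_{n+1}^2}$ and $\varepsilon_{n+1}=\frac{\delta_n^2}{2m_{n+1}^2}$. Put $\Sigma_{n+1}=\overline{D}\big(0,\delta_n(1-\frac1{m_{n+1}})\big)\cap\frac{3\delta_n}{m_{n+1}}\mathbb{Z}^2$ (a finite set). Let $\mathcal S_0=\{0\}$, $P_{0,0}(z,w)=w$, and inductively $\mathcal S_{n+1}=\mathcal S_n\times\Sigma_{n+1}$ and, for $s'=(s,\sigma)\in\mathcal S_{n+1}$, $P_{n+1,s'}=(P_{n,s}-\sigma)^2-\varepsilon_{n+1}A_{n+1}$. Set (all sets taken in $D(0,1/2)\times\mathbb{D}$)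 $X_{n,s}=\{|P_{n,s}|<\delta_n\}$, $X_n=\bigcup_{s\in\mathcal S_n}X_{n,s}$, and $X^{\mathrm{int}}_{n+1,s,\sigma}=\{|P_{n,s}-\sigma|<\delta_n/m_{n+1}\}$ for $s\in\mathcal S_n,\sigma\in\Sigma_{n+1}$. *)

theory Defs
  imports "HOL-Analysis.Analysis"
begin

definition Omega :: "(complex \<times> complex) set" where
  "Omega = ball 0 (1/2) \<times> ball 0 1"

definition horizontal :: "(complex \<times> complex) set \<Rightarrow> bool" where
  "horizontal Z \<longleftrightarrow> (\<exists>e>0. Z \<subseteq> ball 0 (1/2) \<times> ball 0 (1 - e))"

definition Afun :: "(nat \<Rightarrow> complex) \<Rightarrow> nat \<Rightarrow> complex \<times> complex \<Rightarrow> complex" where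
  "Afun a n p = (if odd n then fst p - a n else fst p + snd p / 100 - a n)"

fun delta :: "(nat \<Rightarrow> real) \<Rightarrow> (nat \<Rightarrow> nat) \<Rightarrow> nat \<Rightarrow> real" where
  "delta r m 0 = 1/2"
| "delta r m (Suc n) = (delta r m n)^2 * r (Suc n) / (4 * (real (m (Suc n)))^2)"

definition eps :: "(nat \<Rightarrow> real) \<Rightarrow> (nat \<Rightarrow> nat) \<Rightarrow> nat \<Rightarrow> real" where
  "eps r m n = (delta r m (n - 1))^2 / (2 * (real (m n))^2)"

text \<open>Sigma_{n+1} = closed disk of radius delta_n (1 - 1/m_{n+1}) intersected with
  the lattice (3 delta_n / m_{n+1}) Z[i].  SigmaSet r m n denotes Sigma_{n+1}.\<close>
definition SigmaSet :: "(nat \<Rightarrow> real) \<Rightarrow> (nat \<Rightarrow> nat) \<Rightarrow> nat \<Rightarrow> complex set" where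
  "SigmaSet r m n = cball 0 (delta r m n * (1 - 1 / real (m (Suc n)))) \<inter>
     {complex_of_real (3 * delta r m n / real (m (Suc n))) * (of_int p + \<i> * of_int q) | p q :: int. True}"

text \<open>Index sets S_n, elements encoded as lists: S_0 = {[]} (the single index 0),
  and (s, sigma) in S_{n+1} is encoded as sigma # s.\<close>
fun Sset :: "(nat \<Rightarrow> real) \<Rightarrow> (nat \<Rightarrow> nat) \<Rightarrow> nat \<Rightarrow> complex list set" where
  "Sset r m 0 = {[]}"
| "Sset r m (Suc n) = {\<sigma> # s | \<sigma> s. s \<in> Sset r m n \<and> \<sigma> \<in> SigmaSet r m n}"

fun Pfun :: "(nat \<Rightarrow> complex) \<Rightarrow> (nat \<Rightarrow> real) \<Rightarrow> (nat \<Rightarrow> nat) \<Rightarrow> complex list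
              \<Rightarrow> complex \<times> complex \<Rightarrow> complex" where
  "Pfun a r m [] p = snd p"
| "Pfun a r m (\<sigma> # s) p =
     (Pfun a r m s p - \<sigma>)^2 - complex_of_real (eps r m (Suc (length s))) * Afun a (Suc (length s)) p"

definition Xs :: "(nat \<Rightarrow> complex) \<Rightarrow> (nat \<Rightarrow> real) \<Rightarrow> (nat \<Rightarrow> nat) \<Rightarrow> nat \<Rightarrow> complex list
                  \<Rightarrow> (complex \<times> complex) set" where
  "Xs a r m n s = {p \<in> Omega. cmod (Pfun a r m s p) < delta r m n}"

definition Xn :: "(nat \<Rightarrow> complex) \<Rightarrow> (nat \<Rightarrow> real) \<Rightarrow> (nat \<Rightarrow> nat) \<Rightarrow> nat
                  \<Rightarrow> (complex \<times> complex) set" where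
  "Xn a r m n = (\<Union>s\<in>Sset r m n. Xs a r m n s)"

definition Xint :: "(nat \<Rightarrow> complex) \<Rightarrow> (nat \<Rightarrow> real) \<Rightarrow> (nat \<Rightarrow> nat) \<Rightarrow> nat \<Rightarrow> complex list
                  \<Rightarrow> complex \<Rightarrow> (complex \<times> complex) set" where
  "Xint a r m n s \<sigma> = {p \<in> Omega. cmod (Pfun a r m s p - \<sigma>) < delta r m n / real (m (Suc n))}"

definition Level :: "(nat \<Rightarrow> complex) \<Rightarrow> (nat \<Rightarrow> real) \<Rightarrow> (nat \<Rightarrow> nat) \<Rightarrow> complex list
                  \<Rightarrow> complex \<Rightarrow> (complex \<times> complex) set" where
  "Level a r m s \<alpha> = {p \<in> Omega. Pfun a r m s p = \<alpha>}"

definition fibre :: "(complex \<times> complex) set \<Rightarrow> complex \<Rightarrow> complex set" where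
  "fibre Z z = {w. (z, w) \<in> Z}"

text \<open>Z (a subset of the ambient domain) has degree d over the z-coordinate:
  it is a d-sheeted branched covering of D(0,1/2) via pi_0, i.e. every fibre is
  finite with at most d points, and outside a closed discrete subset E of D(0,1/2)
  (a proper analytic subset of the disk) every fibre has exactly d points.\<close>
definition degree_over_z :: "(complex \<times> complex) set \<Rightarrow> nat \<Rightarrow> bool" where
  "degree_over_z Z d \<longleftrightarrow>
     (\<forall>z\<in>ball 0 (1/2). finite (fibre Z z) \<and> card (fibre Z z) \<le> d) \<and>
     (\<exists>E. (\<forall>z\<in>ball 0 (1/2). \<exists>e>0. ball z e \<inter> E \<subseteq> {z}) \<and>
          (\<forall>z\<in>ball 0 (1/2) - E. card (fibre Z z) = d))"

definition construction :: "(nat \<Rightarrow> complex) \<Rightarrow> (nat \<Rightarrow> real) \<Rightarrow> (nat \<Rightarrow> nat) \<Rightarrow> bool" where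
  "construction a r m \<longleftrightarrow>
     (\<forall>n\<ge>1. a n \<in> ball 0 (1/4)) \<and>
     ball 0 (1/4) \<subseteq> closure {a (2*p) | p. p \<ge> 1} \<and>
     ball 0 (1/4) \<subseteq> closure {a (2*p+1) | p. True} \<and>
     (\<forall>n\<ge>1. 0 < r n \<and> r n \<le> 1/10 \<and> r (Suc n) \<le> r n) \<and>
     (r \<longlonglongrightarrow> 0) \<and>
     (\<forall>n\<ge>1. 0 < m n)"

end

theory Submission
  imports Defs "Subresultants.Subresultant_Gcd" "HOL-Computational_Algebra.Field_as_Ring"
    "HOL-Computational_Algebra.Fundamental_Theorem_Algebra"
begin

(* Since P_{n+1,(s,sigma)} = (P_{n,s} - sigma)^2 - eps_{n+1} A_{n+1},
   2 delta_{n+1} = eps_{n+1} r_{n+1} and |A_{n+1}| < 1 on the closed bidisk, a bound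
   |P_{n+1,(s,sigma)}| <= 2 delta_{n+1} forces |P_{n,s} - sigma| < delta_n / m_{n+1}.  Consequently:
   (i)   each closed tube lies in the corresponding inner tube, hence in the previous tube;
         iterating down to P_0 = w bounds |w| by 1/2 on the level sets (horizontality), and the
         lattice spacing 3 delta_n / m_{n+1} of Sigma_{n+1} separates different tubes and levels;
   (ii)  a continuous graph inside X_{n+1} stays in one (open, disjoint) tube, where
         (P_{n,s} - sigma)^2 is uniformly close to eps_{n+1} (zeta - a_{n+1}): a continuous
         approximate square root of zeta - a_{n+1} on a disk, impossible by an intermediate value
         argument along a circle;
   (iii) over a fixed z the level set is the zero set of a monic polynomial of degree 2^n in w.
         On the annulus 3/8 <= |z| < 1/2 the w-derivative is bounded below, so all 2^n roots are
         simple and move continuously: a covering.  In the whole disk the fibres have 2^n points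
         off the zeros of the discriminant, a nonzero polynomial in z. *)

lemma gaussian_int_norm_ge_1:
  fixes p q :: int
  assumes "(p, q) \<noteq> (0, 0)"
  shows "1 \<le> cmod (of_int p + \<i> * of_int q)"
proof (cases "p = 0")
  case True
  then have "1 \<le> \<bar>Im (of_int p + \<i> * of_int q)\<bar>" using assms by simp
  then show ?thesis using abs_Im_le_cmod order_trans by blast
next
  case False
  then have "1 \<le> \<bar>Re (of_int p + \<i> * of_int q)\<bar>" by simp
  then show ?thesis using abs_Re_le_cmod order_trans by blast
qed

lemma finite_set_separated:
  fixes S :: "'a::metric_space set"
  assumes "finite S"
  obtains \<rho> where "0 < \<rho>" "\<And>x y. x \<in> S \<Longrightarrow> y \<in> S \<Longrightarrow> x \<noteq> y \<Longrightarrow> \<rho> \<le> dist x y"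
proof -
  define D where "D = (\<lambda>(x, y). dist x y) ` {(x, y). x \<in> S \<and> y \<in> S \<and> x \<noteq> y}"
  have "finite D"
    unfolding D_def using assms by (intro finite_imageI) (auto intro: finite_subset[of _ "S \<times> S"])
  show ?thesis
  proof (cases "D = {}")
    case True
    then show ?thesis by (intro that[of 1]) (auto simp: D_def)
  next
    case False
    have "0 < Min D" using \<open>finite D\<close> False by (subst Min_gr_iff) (auto simp: D_def)
    moreover have "Min D \<le> dist x y" if "x \<in> S" "y \<in> S" "x \<noteq> y" for x y
      using \<open>finite D\<close> that by (intro Min_le) (auto simp: D_def)
    ultimately show ?thesis by (rule that)
  qed
qed

lemma minus_const_degree_lead_coeff:
  fixes p :: "'a::comm_ring_1 poly"
  assumes "0 < degree p"
  shows "degree (p - [:c:]) = degree p" "lead_coeff (p - [:c:]) = lead_coeff p"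
proof -
  show "degree (p - [:c:]) = degree p"
    using assms by (subst diff_conv_add_uminus, subst degree_add_eq_left) auto
  then show "lead_coeff (p - [:c:]) = lead_coeff p"
    using assms by (simp add: coeff_pCons split: nat.split)
qed

lemma monic_shifted_square_minus:
  fixes p q :: "'a::idom poly"
  assumes dp: "degree p = d" and d: "1 \<le> d" and lp: "lead_coeff p = 1" and dq: "degree q \<le> 1"
  shows "degree ((p - [:c:])^2 - q) = 2 * d \<and> lead_coeff ((p - [:c:])^2 - q) = 1"
proof -
  have "0 < degree p" using dp d by simp
  note minus = minus_const_degree_lead_coeff[OF this, of c]
  have d1: "degree (p - [:c:]) = d" using minus(1) dp by simp
  have l1: "lead_coeff (p - [:c:]) = 1" using minus(2) lp by simp
  then have "p - [:c:] \<noteq> 0" by auto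
  then have d2: "degree ((p - [:c:])^2) = 2 * d" using degree_power_eq[of "p - [:c:]" 2] d1 by simp
  have l2: "lead_coeff ((p - [:c:])^2) = 1" using l1 by (simp add: lead_coeff_power)
  have d3: "degree ((p - [:c:])^2 - q) = 2 * d"
    using d2 dq d by (subst diff_conv_add_uminus, subst degree_add_eq_left) auto
  have "coeff q (2 * d) = 0" using dq d by (intro coeff_eq_0) auto
  then show ?thesis using d3 d2 l2 by simp
qed

lemma card_roots_rsquarefree:
  fixes p :: "complex poly"
  assumes "rsquarefree p"
  shows "card {x. poly p x = 0} = degree p"
proof -
  have p0: "p \<noteq> 0" using assms by (simp add: rsquarefree_def)
  have "degree p = degree (Polynomial.smult (lead_coeff p) (\<Prod>z | poly p z = 0. [:-z, 1:]))"
    using complex_poly_decompose_rsquarefree[OF assms] by simp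
  also have "\<dots> = (\<Sum>z | poly p z = 0. degree [:-z, 1:])"
    using p0 by (simp add: degree_prod_eq_sum_degree)
  also have "\<dots> = card {x. poly p x = 0}" by simp
  finally show ?thesis by simp
qed

lemma resultant_pderiv_nonzero_iff_rsquarefree:
  fixes f :: "complex poly"
  assumes f0: "f \<noteq> 0"
  shows "resultant f (pderiv f) \<noteq> 0 \<longleftrightarrow> rsquarefree f"
proof -
  have "(\<exists>x. [:-x, 1:] dvd gcd f (pderiv f)) \<longleftrightarrow> degree (gcd f (pderiv f)) \<noteq> 0"
  proof
    assume "\<exists>x. [:-x, 1:] dvd gcd f (pderiv f)"
    then obtain x where "[:-x, 1:] dvd gcd f (pderiv f)" by blast
    moreover have "gcd f (pderiv f) \<noteq> 0" using f0 by simp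
    ultimately have "degree [:-x, 1:] \<le> degree (gcd f (pderiv f))" by (rule dvd_imp_degree_le)
    then show "degree (gcd f (pderiv f)) \<noteq> 0" by simp
  next
    assume "degree (gcd f (pderiv f)) \<noteq> 0"
    then have "\<not> constant (poly (gcd f (pderiv f)))" by (simp add: constant_degree)
    then obtain x where "poly (gcd f (pderiv f)) x = 0" using fundamental_theorem_of_algebra by blast
    then show "\<exists>x. [:-x, 1:] dvd gcd f (pderiv f)" by (auto simp: poly_eq_0_iff_dvd)
  qed
  moreover have "[:-x, 1:] dvd gcd f (pderiv f) \<longleftrightarrow> poly f x = 0 \<and> poly (pderiv f) x = 0" for x
    by (simp add: poly_eq_0_iff_dvd)
  ultimately show ?thesis
    unfolding rsquarefree_roots resultant_0_gcd[symmetric] by blast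
qed

lemma monic_family_root_nearby:
  fixes Fz :: "'a::metric_space \<Rightarrow> complex poly"
  assumes monic: "\<And>z. lead_coeff (Fz z) = 1" and deg: "\<And>z. degree (Fz z) = d"
    and cont: "\<And>w. continuous_on UNIV (\<lambda>z. poly (Fz z) w)"
    and root: "poly (Fz z0) w0 = 0" and \<eta>: "0 < \<eta>"
  shows "eventually (\<lambda>z. \<exists>w. poly (Fz z) w = 0 \<and> dist w w0 < \<eta>) (nhds z0)"
proof -
  have "0 < \<eta> ^ d" using \<eta> by simp
  then obtain \<delta> where \<delta>: "0 < \<delta>"
    "\<And>z. dist z z0 < \<delta> \<Longrightarrow> dist (poly (Fz z) w0) (poly (Fz z0) w0) < \<eta> ^ d"
    using cont[of w0] unfolding continuous_on_iff by blast
  show ?thesis unfolding eventually_nhds_metric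
  proof (intro exI[of _ \<delta>] conjI allI impI)
    show "0 < \<delta>" by fact
    fix z assume z: "dist z z0 < \<delta>"
    have small: "cmod (poly (Fz z) w0) < \<eta> ^ d" using \<delta>(2)[OF z] root by (simp add: dist_norm)
    obtain rt where "Polynomial.smult (lead_coeff (Fz z)) (\<Prod>i<degree (Fz z). [:- rt i, 1:]) = Fz z"
      using complex_poly_decompose' by blast
    then have "Fz z = (\<Prod>i<d. [:- rt i, 1:])" using monic[of z] deg[of z] by simp
    then have factor: "poly (Fz z) v = (\<Prod>i<d. v - rt i)" for v by (simp add: poly_prod)
    show "\<exists>w. poly (Fz z) w = 0 \<and> dist w w0 < \<eta>"
    proof (rule ccontr)
      assume no_root: "\<not> ?thesis"
      have "poly (Fz z) (rt i) = 0" if "i < d" for i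
        unfolding factor using that by (subst prod_zero_iff) auto
      then have far: "\<eta> \<le> cmod (w0 - rt i)" if "i < d" for i
        using no_root that by (fastforce simp: dist_norm norm_minus_commute)
      have "\<eta> ^ d = (\<Prod>i<d. \<eta>)" by simp
      also have "\<dots> \<le> (\<Prod>i<d. cmod (w0 - rt i))" using far \<eta> by (intro prod_mono) auto
      also have "\<dots> = cmod (poly (Fz z) w0)" unfolding factor by (simp add: prod_norm)
      finally show False using small by simp
    qed
  qed
qed

lemma matching_of_nearby_points:
  fixes Z Z0 :: "'a::metric_space set"
  assumes finZ: "finite Z" and card: "card Z = card Z0"
    and sep: "\<And>x y. x \<in> Z0 \<Longrightarrow> y \<in> Z0 \<Longrightarrow> x \<noteq> y \<Longrightarrow> 2 * h \<le> dist x y"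
    and near: "\<And>x. x \<in> Z0 \<Longrightarrow> \<exists>w\<in>Z. dist w x < h"
  shows "\<And>w. w \<in> Z \<Longrightarrow> \<exists>x\<in>Z0. dist w x < h"
    and "\<And>x w w'. x \<in> Z0 \<Longrightarrow> w \<in> Z \<Longrightarrow> w' \<in> Z \<Longrightarrow> dist w x < h \<Longrightarrow> dist w' x < h \<Longrightarrow> w = w'"
proof -
  have same_centre: "x = y" if "x \<in> Z0" "y \<in> Z0" "dist w x < h" "dist w y < h" for x y w
  proof (rule ccontr)
    assume "x \<noteq> y"
    then have "2 * h \<le> dist x y" using sep that by blast
    moreover have "dist x y \<le> dist w x + dist w y" by (metis dist_commute dist_triangle)
    ultimately show False using that by simp
  qed
  obtain \<phi> where \<phi>: "\<And>x. x \<in> Z0 \<Longrightarrow> \<phi> x \<in> Z \<and> dist (\<phi> x) x < h"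
    using near by metis
  have "inj_on \<phi> Z0" using \<phi> same_centre by (intro inj_onI) metis
  then have "card (\<phi> ` Z0) = card Z" using card by (simp add: card_image)
  moreover have "\<phi> ` Z0 \<subseteq> Z" using \<phi> by auto
  ultimately have onto: "\<phi> ` Z0 = Z" using card_subset_eq[OF finZ] by blast
  show "\<exists>x\<in>Z0. dist w x < h" if "w \<in> Z" for w
    using that \<phi> onto by blast
  show "w = w'" if "x \<in> Z0" "w \<in> Z" "w' \<in> Z" "dist w x < h" "dist w' x < h" for x w w'
  proof -
    have "w \<in> \<phi> ` Z0" "w' \<in> \<phi> ` Z0" using that onto by auto
    then obtain y y' where "y \<in> Z0" "w = \<phi> y" "y' \<in> Z0" "w' = \<phi> y'" by blast
    then have "y = x" "y' = x" using same_centre \<phi> that by metis+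
    then show ?thesis using \<open>w = \<phi> y\<close> \<open>w' = \<phi> y'\<close> by simp
  qed
qed

lemma monic_family_roots_local_matching:
  fixes Fz :: "'a::metric_space \<Rightarrow> complex poly"
  assumes monic: "\<And>z. lead_coeff (Fz z) = 1" and deg: "\<And>z. degree (Fz z) = d"
    and cont: "\<And>w. continuous_on UNIV (\<lambda>z. poly (Fz z) w)"
    and card: "\<And>z. z \<in> K \<Longrightarrow> card {w. poly (Fz z) w = 0} = d" and z0: "z0 \<in> K"
  obtains h \<delta> where "0 < h" "0 < \<delta>"
    "\<And>z w. z \<in> K \<Longrightarrow> dist z z0 < \<delta> \<Longrightarrow> poly (Fz z) w = 0 \<Longrightarrow> \<exists>x. poly (Fz z0) x = 0 \<and> dist w x < h"
    "\<And>z x. z \<in> K \<Longrightarrow> dist z z0 < \<delta> \<Longrightarrow> poly (Fz z0) x = 0 \<Longrightarrow>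
       \<exists>!w. poly (Fz z) w = 0 \<and> dist w x < h"
    "\<And>x y. poly (Fz z0) x = 0 \<Longrightarrow> poly (Fz z0) y = 0 \<Longrightarrow> x \<noteq> y \<Longrightarrow> 2 * h \<le> dist x y"
proof -
  define roots where "roots z = {w. poly (Fz z) w = 0}" for z
  have fin: "finite (roots z)" for z
    unfolding roots_def using monic[of z] by (intro poly_roots_finite) auto
  obtain \<rho> where \<rho>: "0 < \<rho>" "\<And>x y. x \<in> roots z0 \<Longrightarrow> y \<in> roots z0 \<Longrightarrow> x \<noteq> y \<Longrightarrow> \<rho> \<le> dist x y"
    using finite_set_separated[OF fin] by blast
  define h where "h = \<rho> / 2"
  have h: "0 < h" using \<rho>(1) by (simp add: h_def)
  have "\<forall>x\<in>roots z0. eventually (\<lambda>z. \<exists>w\<in>roots z. dist w x < h) (nhds z0)"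
  proof
    fix x assume "x \<in> roots z0"
    then show "eventually (\<lambda>z. \<exists>w\<in>roots z. dist w x < h) (nhds z0)"
      using monic_family_root_nearby[OF monic deg cont _ h, of z0 x] by (simp add: roots_def)
  qed
  then have "eventually (\<lambda>z. \<forall>x\<in>roots z0. \<exists>w\<in>roots z. dist w x < h) (nhds z0)"
    by (rule eventually_ball_finite[OF fin])
  then obtain \<delta> where \<delta>: "0 < \<delta>" "\<And>z. dist z z0 < \<delta> \<Longrightarrow> \<forall>x\<in>roots z0. \<exists>w\<in>roots z. dist w x < h"
    unfolding eventually_nhds_metric by blast
  have sep: "2 * h \<le> dist x y" if "x \<in> roots z0" "y \<in> roots z0" "x \<noteq> y" for x y
    using \<rho>(2)[OF that] by (simp add: h_def)
  have match: "\<exists>x\<in>roots z0. dist w x < h" if "w \<in> roots z" "z \<in> K" "dist z z0 < \<delta>" for z w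
  proof -
    have "card (roots z) = card (roots z0)" using card that(2) z0 by (simp add: roots_def)
    from matching_of_nearby_points(1)[OF fin[of z] this sep] \<delta>(2)[OF that(3)] that(1)
    show ?thesis by blast
  qed
  have unique: "w = w'" if "x \<in> roots z0" "w \<in> roots z" "w' \<in> roots z"
    "dist w x < h" "dist w' x < h" "z \<in> K" "dist z z0 < \<delta>" for z x w w'
  proof -
    have "card (roots z) = card (roots z0)" using card that(6) z0 by (simp add: roots_def)
    from matching_of_nearby_points(2)[OF fin[of z] this sep] \<delta>(2)[OF that(7)] that(1-5)
    show ?thesis by blast
  qed
  show ?thesis
  proof (rule that[of h \<delta>])
    show "0 < h" "0 < \<delta>" using h \<delta>(1) by simp_all
    show "\<exists>x. poly (Fz z0) x = 0 \<and> dist w x < h"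
      if "z \<in> K" "dist z z0 < \<delta>" "poly (Fz z) w = 0" for z w
      using match[of w z] that by (simp add: roots_def)
    show "\<exists>!w. poly (Fz z) w = 0 \<and> dist w x < h"
      if "z \<in> K" "dist z z0 < \<delta>" "poly (Fz z0) x = 0" for z x
    proof (rule ex_ex1I)
      show "\<exists>w. poly (Fz z) w = 0 \<and> dist w x < h"
        using \<delta>(2)[OF that(2)] that(3) by (simp add: roots_def)
      show "w = w'" if "poly (Fz z) w = 0 \<and> dist w x < h" "poly (Fz z) w' = 0 \<and> dist w' x < h"
        for w w'
        using unique[where z = z and x = x and w = w and w' = w'] that \<open>z \<in> K\<close> \<open>dist z z0 < \<delta>\<close> \<open>poly (Fz z0) x = 0\<close>
        by (simp add: roots_def)
    qed
    show "2 * h \<le> dist x y" if "poly (Fz z0) x = 0" "poly (Fz z0) y = 0" "x \<noteq> y" for x y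
      using sep that by (simp add: roots_def)
  qed
qed

lemma continuous_on_root_branch:
  fixes Fz :: "'a::metric_space \<Rightarrow> complex poly"
  assumes monic: "\<And>z. lead_coeff (Fz z) = 1" and deg: "\<And>z. degree (Fz z) = d"
    and cont: "\<And>w. continuous_on UNIV (\<lambda>z. poly (Fz z) w)"
    and uniq: "\<And>z. z \<in> U \<Longrightarrow> \<exists>!w. poly (Fz z) w = 0 \<and> dist w x < h"
  shows "continuous_on U (\<lambda>z. THE w. poly (Fz z) w = 0 \<and> dist w x < h)"
    (is "continuous_on U ?q")
  unfolding continuous_on_iff
proof (intro ballI allI impI)
  fix z1 e assume z1: "z1 \<in> U" and e: "0 < (e::real)"
  have w1: "poly (Fz z1) (?q z1) = 0" "dist (?q z1) x < h"
    using theI'[OF uniq[OF z1]] by auto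
  define \<eta> where "\<eta> = min e (h - dist (?q z1) x)"
  have "0 < \<eta>" using e w1 by (simp add: \<eta>_def)
  then obtain d1 where d1: "0 < d1"
    "\<And>z. dist z z1 < d1 \<Longrightarrow> \<exists>w. poly (Fz z) w = 0 \<and> dist w (?q z1) < \<eta>"
    using monic_family_root_nearby[OF monic deg cont w1(1)] unfolding eventually_nhds_metric by blast
  show "\<exists>d>0. \<forall>z\<in>U. dist z z1 < d \<longrightarrow> dist (?q z) (?q z1) < e"
  proof (intro exI[of _ d1] conjI ballI impI)
    fix z assume z: "z \<in> U" "dist z z1 < d1"
    obtain w where w: "poly (Fz z) w = 0" "dist w (?q z1) < \<eta>" using d1(2)[OF z(2)] by blast
    have "dist w x \<le> dist w (?q z1) + dist (?q z1) x" by (rule dist_triangle)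
    then have "dist w x < h" using w(2) by (simp add: \<eta>_def)
    then have "?q z = w" using uniq[OF z(1)] w(1) by (auto intro: the1_equality)
    then show "dist (?q z) (?q z1) < e" using w(2) by (simp add: \<eta>_def)
  qed (use d1 in simp)
qed

lemma covering_space_monic_roots:
  fixes Fz :: "'a::metric_space \<Rightarrow> complex poly"
  assumes monic: "\<And>z. lead_coeff (Fz z) = 1" and deg: "\<And>z. degree (Fz z) = d"
    and cont: "\<And>w. continuous_on UNIV (\<lambda>z. poly (Fz z) w)"
    and card: "\<And>z. z \<in> K \<Longrightarrow> card {w. poly (Fz z) w = 0} = d" and d: "0 < d"
  shows "covering_space {(z, w). z \<in> K \<and> poly (Fz z) w = 0} fst K"
    (is "covering_space ?C fst K")
proof
  show "continuous_on ?C fst" by (intro continuous_intros)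
  have "{w. poly (Fz z) w = 0} \<noteq> {}" if "z \<in> K" for z
    using card[OF that] d by (metis card.empty less_irrefl)
  then show "fst ` ?C = K" by (force simp: image_iff)
  fix z0 assume z0: "z0 \<in> K"
  obtain h \<delta> where "0 < h" and \<delta>: "0 < \<delta>"
    and cover: "\<And>z w. z \<in> K \<Longrightarrow> dist z z0 < \<delta> \<Longrightarrow> poly (Fz z) w = 0 \<Longrightarrow>
                  \<exists>x. poly (Fz z0) x = 0 \<and> dist w x < h"
    and uniq: "\<And>z x. z \<in> K \<Longrightarrow> dist z z0 < \<delta> \<Longrightarrow> poly (Fz z0) x = 0 \<Longrightarrow>
                  \<exists>!w. poly (Fz z) w = 0 \<and> dist w x < h"
    and sep: "\<And>x y. poly (Fz z0) x = 0 \<Longrightarrow> poly (Fz z0) y = 0 \<Longrightarrow> x \<noteq> y \<Longrightarrow> 2 * h \<le> dist x y"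
    using monic_family_roots_local_matching[OF monic deg cont card z0] by blast
  define U where "U = K \<inter> ball z0 \<delta>"
  define Z0 where "Z0 = {x. poly (Fz z0) x = 0}"
  define q where "q x z = (THE w. poly (Fz z) w = 0 \<and> dist w x < h)" for x z
  have uniqU: "\<exists>!w. poly (Fz z) w = 0 \<and> dist w x < h" if "z \<in> U" "x \<in> Z0" for x z
    using uniq[of z x] that by (simp add: U_def Z0_def dist_commute[of z0 z])
  have q: "poly (Fz z) (q x z) = 0 \<and> dist (q x z) x < h" if "z \<in> U" "x \<in> Z0" for x z
    unfolding q_def by (rule theI'[OF uniqU[OF that]])
  define V where "V x = ?C \<inter> (ball z0 \<delta> \<times> ball x h)" for x
  have V_graph: "V x = (\<lambda>z. (z, q x z)) ` U" if x: "x \<in> Z0" for x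
  proof (intro equalityI subsetI)
    fix p assume "p \<in> V x"
    then obtain z w where p: "p = (z, w)" "z \<in> U" "poly (Fz z) w = 0" "dist w x < h"
      by (auto simp: V_def U_def dist_commute)
    then have "q x z = w" unfolding q_def using uniqU[OF p(2) x] by (auto intro: the1_equality)
    then show "p \<in> (\<lambda>z. (z, q x z)) ` U" using p by auto
  qed (use q x in \<open>auto simp: V_def U_def dist_commute\<close>)
  show "\<exists>T. z0 \<in> T \<and> openin (top_of_set K) T \<and>
           (\<exists>v. \<Union>v = ?C \<inter> fst -` T \<and> (\<forall>u\<in>v. openin (top_of_set ?C) u) \<and>
                pairwise disjnt v \<and> (\<forall>u\<in>v. \<exists>q. homeomorphism u T fst q))"
  proof (intro exI conjI)
    show "z0 \<in> U" using z0 \<delta> by (simp add: U_def)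
    show "openin (top_of_set K) U" unfolding U_def by (rule openin_open_Int) simp
    show "\<Union> (V ` Z0) = ?C \<inter> fst -` U"
      using cover by (fastforce simp: V_def U_def Z0_def dist_commute)
    show "\<forall>u\<in>V ` Z0. openin (top_of_set ?C) u"
      unfolding V_def by (auto intro!: openin_open_Int open_Times)
    show "pairwise disjnt (V ` Z0)"
    proof (rule pairwise_imageI)
      fix x y assume xy: "x \<in> Z0" "y \<in> Z0" "x \<noteq> y"
      show "disjnt (V x) (V y)" unfolding disjnt_iff
      proof (intro allI notI)
        fix p assume "p \<in> V x \<and> p \<in> V y"
        then have "dist (snd p) x < h" "dist (snd p) y < h" by (auto simp: V_def dist_commute)
        then have "dist x y < 2 * h" by (smt (verit) dist_commute dist_triangle)
        then show False using sep[of x y] xy by (simp add: Z0_def)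
      qed
    qed
    show "\<forall>u\<in>V ` Z0. \<exists>g. homeomorphism u U fst g"
    proof
      fix u assume "u \<in> V ` Z0"
      then obtain x where x: "x \<in> Z0" "u = V x" by blast
      have "continuous_on U (q x)"
        unfolding q_def using uniqU[OF _ x(1)] by (rule continuous_on_root_branch[OF monic deg cont])
      then have "homeomorphism ((\<lambda>z. (z, q x z)) ` U) U fst (\<lambda>z. (z, q x z))"
        unfolding homeomorphism_def by (auto intro!: continuous_intros simp: image_image)
      then show "\<exists>g. homeomorphism u U fst g" using V_graph[OF x(1)] x(2) by auto
    qed
  qed
qed

text \<open>The square of a purely imaginary number is a nonpositive real, so its distance to any
  t \<ge> 0 is at least t.\<close>
lemma imaginary_square_far_from_nonneg:
  assumes "Re \<phi> = 0" "0 \<le> t"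
  shows "t \<le> cmod (\<phi>^2 - complex_of_real t)"
proof -
  define y where "y = Im \<phi>"
  have "\<phi> = \<i> * complex_of_real y" using assms(1) by (simp add: complex_eq_iff y_def)
  then have "\<phi>^2 - complex_of_real t = - complex_of_real (y ^ 2 + t)"
    by (simp add: power_mult_distrib)
  then have "cmod (\<phi>^2 - complex_of_real t) = \<bar>y^2 + t\<bar>"
    by (simp only: norm_minus_cancel norm_of_real)
  then show ?thesis using assms(2) by simp
qed

text \<open>Along the circle of
  radius 3R/4, G(\<zeta>) divided by the continuous half-angle root e^{ix/2} would be a continuous
  function with nonvanishing real part that changes sign after one turn.\<close>
lemma no_approximate_sqrt_on_disk:
  fixes G :: "complex \<Rightarrow> complex" and c :: complex
  assumes e: "0 < e" and R: "0 < R" and cont: "continuous_on (ball c R) G"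
    and approx: "\<And>\<zeta>. \<zeta> \<in> ball c R \<Longrightarrow> cmod (G \<zeta> ^ 2 - complex_of_real e * (\<zeta> - c)) < e * R / 2"
  shows False
proof -
  define \<rho> where "\<rho> = 3 * R / 4"
  define \<gamma> where "\<gamma> x = c + complex_of_real \<rho> * exp (\<i> * complex_of_real x)" for x :: real
  define E where "E x = exp (\<i> * complex_of_real (x / 2))" for x :: real
  define \<phi> where "\<phi> x = G (\<gamma> x) / E x" for x
  have \<rho>: "0 < \<rho>" using R by (simp add: \<rho>_def)
  have \<gamma>_in: "\<gamma> x \<in> ball c R" for x
    using \<rho> R by (simp add: \<gamma>_def dist_norm norm_mult \<rho>_def)
  have "continuous_on {0..2*pi} \<gamma>" unfolding \<gamma>_def by (intro continuous_intros)
  then have "continuous_on {0..2*pi} (\<lambda>x. G (\<gamma> x))"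
    using \<gamma>_in by (intro continuous_on_compose2[OF cont]) auto
  then have cont_Re: "continuous_on {0..2*pi} (\<lambda>x. Re (\<phi> x))"
    unfolding \<phi>_def E_def by (intro continuous_intros) auto
  have Re_nonzero: "Re (\<phi> x) \<noteq> 0" for x
  proof
    assume "Re (\<phi> x) = 0"
    then have "e * \<rho> \<le> cmod (\<phi> x ^ 2 - complex_of_real (e * \<rho>))"
      using e \<rho> by (intro imaginary_square_far_from_nonneg) auto
    also have "\<dots> = cmod (G (\<gamma> x) ^ 2 - complex_of_real e * (\<gamma> x - c))"
    proof -
      have "E x ^ 2 = exp (\<i> * complex_of_real x)"
        by (simp add: E_def power2_eq_square exp_add[symmetric] algebra_simps)
      moreover have "E x \<noteq> 0" "cmod (E x) = 1" by (simp_all add: E_def)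
      ultimately have "G (\<gamma> x) ^ 2 - complex_of_real e * (\<gamma> x - c)
                         = (\<phi> x ^ 2 - complex_of_real (e * \<rho>)) * E x ^ 2"
        by (simp add: \<phi>_def \<gamma>_def power_divide field_simps)
      then show ?thesis using \<open>cmod (E x) = 1\<close> by (simp add: norm_mult norm_power)
    qed
    also have "\<dots> < e * R / 2" by (rule approx[OF \<gamma>_in])
    finally show False using e R by (simp add: \<rho>_def)
  qed
  have "\<gamma> (2 * pi) = \<gamma> 0"
    by (simp add: \<gamma>_def exp_two_pi_i[unfolded mult.commute[of _ \<i>]] algebra_simps)
  moreover have "E (2 * pi) = - E 0" by (simp add: E_def exp_pi_i')
  ultimately have sign_flip: "Re (\<phi> (2 * pi)) = - Re (\<phi> 0)" by (simp add: \<phi>_def)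
  obtain x where "Re (\<phi> x) = 0"
  proof (cases "Re (\<phi> 0) < 0")
    case True
    then show ?thesis
      using IVT'[of "\<lambda>x. Re (\<phi> x)" 0 0 "2*pi"] cont_Re sign_flip that by auto
  next
    case False
    then show ?thesis
      using IVT2'[of "\<lambda>x. Re (\<phi> x)" "2*pi" 0 0] cont_Re sign_flip that by auto
  qed
  then show False using Re_nonzero by blast
qed

locale tube_construction =
  fixes a :: "nat \<Rightarrow> complex" and r :: "nat \<Rightarrow> real" and m :: "nat \<Rightarrow> nat"
  assumes construction: "construction a r m"
begin

abbreviation "\<delta> \<equiv> delta r m"
abbreviation "\<epsilon> \<equiv> eps r m"
abbreviation "M k \<equiv> real (m (Suc k))"
abbreviation "P \<equiv> Pfun a r m"

text \<open>The recursion equations of P and \<delta> are applied explicitly (P_Cons, two_delta_Suc), so that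
  the simplifier does not expand nested polynomials.\<close>
declare Pfun.simps(2)[simp del] delta.simps(2)[simp del]

lemma M_ge_1: "1 \<le> M k"
  using construction by (simp add: construction_def Suc_le_eq)

lemma r_pos: "0 < r (Suc k)" and r_le: "r (Suc k) \<le> 1/10"
  using construction unfolding construction_def by auto

lemma a_bound: "1 \<le> k \<Longrightarrow> cmod (a k) < 1/4"
  using construction unfolding construction_def by auto

lemma delta_pos: "0 < \<delta> k"
proof (induction k)
  case (Suc k)
  then show ?case using r_pos[of k] M_ge_1[of k] by (simp add: delta.simps(2))
qed simp

lemma eps_Suc: "\<epsilon> (Suc k) = \<delta> k ^ 2 / (2 * M k ^ 2)"
  by (simp add: eps_def)

lemma eps_pos: "0 < \<epsilon> (Suc k)"
  using delta_pos[of k] M_ge_1[of k] by (simp add: eps_Suc)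

lemma two_delta_Suc: "2 * \<delta> (Suc k) = \<epsilon> (Suc k) * r (Suc k)"
  by (simp add: eps_def delta.simps(2) field_simps)

lemma Sset_length: "s \<in> Sset r m k \<Longrightarrow> length s = k"
  by (induction k arbitrary: s) auto

lemma P_Cons: "t \<in> Sset r m k \<Longrightarrow>
   P (\<sigma> # t) p = (P t p - \<sigma>)^2 - complex_of_real (\<epsilon> (Suc k)) * Afun a (Suc k) p"
  by (simp add: Sset_length Pfun.simps(2))

lemma Sigma_norm: "\<sigma> \<in> SigmaSet r m k \<Longrightarrow> cmod \<sigma> \<le> \<delta> k * (1 - 1 / M k)"
  by (auto simp: SigmaSet_def)

lemma Sigma_separated:
  assumes "\<sigma>1 \<in> SigmaSet r m k" "\<sigma>2 \<in> SigmaSet r m k" "\<sigma>1 \<noteq> \<sigma>2"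
  shows "3 * \<delta> k / M k \<le> cmod (\<sigma>1 - \<sigma>2)"
proof -
  define c where "c = 3 * \<delta> k / M k"
  have c: "0 < c" using delta_pos[of k] M_ge_1[of k] by (simp add: c_def)
  obtain p1 q1 p2 q2 where
    \<sigma>1: "\<sigma>1 = complex_of_real c * (of_int p1 + \<i> * of_int q1)" and
    \<sigma>2: "\<sigma>2 = complex_of_real c * (of_int p2 + \<i> * of_int q2)"
    using assms(1,2) by (auto simp: SigmaSet_def c_def)
  have "(p1 - p2, q1 - q2) \<noteq> (0, 0)" using assms(3) \<sigma>1 \<sigma>2 by auto
  then have ge1: "1 \<le> cmod (of_int (p1 - p2) + \<i> * of_int (q1 - q2))"
    by (rule gaussian_int_norm_ge_1)
  have "\<sigma>1 - \<sigma>2 = complex_of_real c * (of_int (p1 - p2) + \<i> * of_int (q1 - q2))"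
    unfolding \<sigma>1 \<sigma>2 by (simp add: algebra_simps)
  then have eq: "cmod (\<sigma>1 - \<sigma>2) = c * cmod (of_int (p1 - p2) + \<i> * of_int (q1 - q2))"
    using c by (simp add: norm_mult)
  have "c * 1 \<le> c * cmod (of_int (p1 - p2) + \<i> * of_int (q1 - q2))"
    using ge1 c by (intro mult_left_mono) auto
  then show ?thesis unfolding eq by (simp add: c_def)
qed

lemma finite_Sigma: "finite (SigmaSet r m k)"
proof -
  define c where "c = 3 * \<delta> k / M k"
  have c: "0 < c" using delta_pos[of k] M_ge_1[of k] by (simp add: c_def)
  define N :: int where "N = \<lceil>M k\<rceil>"
  have "SigmaSet r m k \<subseteq>
          (\<lambda>(p, q). complex_of_real c * (of_int p + \<i> * of_int q)) ` ({-N..N} \<times> {-N..N})"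
  proof
    fix \<sigma> assume \<sigma>: "\<sigma> \<in> SigmaSet r m k"
    then obtain p q where pq: "\<sigma> = complex_of_real c * (of_int p + \<i> * of_int q)"
      by (auto simp: SigmaSet_def c_def)
    have "\<delta> k * (1 - 1 / M k) \<le> \<delta> k"
      using delta_pos[of k] M_ge_1[of k] by (intro mult_left_le) auto
    then have "c * cmod (of_int p + \<i> * of_int q) \<le> \<delta> k"
      using Sigma_norm[OF \<sigma>] pq c by (simp add: norm_mult)
    then have g: "cmod (of_int p + \<i> * of_int q) \<le> M k / 3"
      using c delta_pos[of k] M_ge_1[of k] by (simp add: c_def field_simps)
    have "\<bar>real_of_int p\<bar> \<le> M k / 3" "\<bar>real_of_int q\<bar> \<le> M k / 3"
      using abs_Re_le_cmod[of "of_int p + \<i> * of_int q"] abs_Im_le_cmod[of "of_int p + \<i> * of_int q"] g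
      by simp_all
    moreover have "M k / 3 \<le> real_of_int N"
      unfolding N_def using M_ge_1[of k] le_of_int_ceiling[of "M k"] by linarith
    ultimately have "real_of_int \<bar>p\<bar> \<le> real_of_int N" "real_of_int \<bar>q\<bar> \<le> real_of_int N"
      by auto
    then have "\<bar>p\<bar> \<le> N" "\<bar>q\<bar> \<le> N" by (simp_all only: of_int_le_iff)
    then show "\<sigma> \<in> (\<lambda>(p, q). complex_of_real c * (of_int p + \<i> * of_int q)) ` ({-N..N} \<times> {-N..N})"
      using pq by (auto intro!: image_eqI[of _ _ "(p, q)"])
  qed
  then show ?thesis by (rule finite_subset) auto
qed

lemma finite_Sset: "finite (Sset r m k)"
proof (induction k)
  case (Suc k)
  have "Sset r m (Suc k) = (\<lambda>(\<sigma>, t). \<sigma> # t) ` (SigmaSet r m k \<times> Sset r m k)" by auto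
  then show ?case using Suc finite_Sigma by simp
qed simp

lemma continuous_P: "continuous_on UNIV (P s)"
proof (induction s)
  case (Cons \<sigma> s)
  have "continuous_on UNIV (Afun a k)" for k
    unfolding Afun_def by (cases "odd k") (auto intro!: continuous_intros)
  then show ?case using Cons by (simp add: Pfun.simps(2), intro continuous_intros) auto
qed (simp add: continuous_on_snd)

lemma A_upper:
  assumes "1 \<le> k" "cmod z \<le> 1/2" "cmod w \<le> u" "1 \<le> u"
  shows "cmod (Afun a k (z, w)) \<le> 19/25 * u"
proof -
  have "cmod (z - a k) \<le> cmod z + cmod (a k)" by (rule norm_triangle_ineq4)
  moreover have "cmod (z + w / 100 - a k) \<le> cmod z + cmod w / 100 + cmod (a k)"
    using norm_triangle_ineq4[of "z + w / 100" "a k"] norm_triangle_ineq[of z "w / 100"] by simp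
  ultimately show ?thesis using a_bound[OF assms(1)] assms by (auto simp: Afun_def)
qed

lemma A_lower:
  assumes "1 \<le> k" "3/8 \<le> cmod z" "cmod w \<le> 1/2"
  shows "3/25 \<le> cmod (Afun a k (z, w))"
proof -
  have "cmod z \<le> cmod (z - a k) + cmod (a k)" using norm_triangle_ineq[of "z - a k" "a k"] by simp
  moreover have "cmod z \<le> cmod (z + w / 100 - a k) + cmod w / 100 + cmod (a k)"
    using norm_triangle_ineq4[of "z + w / 100 - a k" "w / 100"]
      norm_triangle_ineq[of "z + w / 100 - a k - w / 100" "a k"] by simp
  ultimately show ?thesis using a_bound[OF assms(1)] assms by (auto simp: Afun_def)
qed

text \<open>The key estimate: a bound |P_{k+1,(t,\<sigma>)}| \<le> 2\<delta>_{k+1} u forces P_{k,t} to be close to \<sigma>,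
  because (P_{k,t} - \<sigma>)^2 = P_{k+1,(t,\<sigma>)} + \<epsilon>_{k+1} A_{k+1} and 2\<delta>_{k+1} = \<epsilon>_{k+1} r_{k+1}.\<close>
lemma tube_step_square:
  assumes t: "t \<in> Sset r m k" and z: "cmod z \<le> 1/2" and w: "cmod w \<le> u" and u: "1 \<le> u"
    and small: "cmod (P (\<sigma> # t) (z, w)) \<le> 2 * \<delta> (Suc k) * u"
  shows "cmod (P t (z, w) - \<sigma>)^2 \<le> 43/100 * u * (\<delta> k / M k)^2"
proof -
  define e where "e = \<epsilon> (Suc k)"
  define A where "A = Afun a (Suc k) (z, w)"
  have e: "0 < e" using eps_pos by (simp add: e_def)
  have eq: "(P t (z, w) - \<sigma>)^2 = P (\<sigma> # t) (z, w) + complex_of_real e * A"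
    using P_Cons[OF t] by (simp add: e_def A_def)
  have "cmod (P t (z, w) - \<sigma>)^2 = cmod ((P t (z, w) - \<sigma>)^2)" by (simp add: norm_power)
  also have "\<dots> \<le> cmod (P (\<sigma> # t) (z, w)) + e * cmod A"
    unfolding eq using e norm_triangle_ineq[of "P (\<sigma> # t) (z, w)" "complex_of_real e * A"]
    by (simp add: norm_mult)
  also have "\<dots> \<le> e * r (Suc k) * u + e * (19/25 * u)"
    using small A_upper[of "Suc k" z w u] z w u e
    by (intro add_mono) (auto simp: two_delta_Suc e_def A_def)
  also have "\<dots> \<le> e * (1/10) * u + e * (19/25 * u)"
    using r_le[of k] e u by (intro add_mono mult_right_mono mult_left_mono) auto
  also have "\<dots> = 43/100 * u * (\<delta> k / M k)^2"
    by (simp add: e_def eps_Suc power_divide field_simps)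
  finally show ?thesis .
qed

lemma tube_step_inner:
  assumes t: "t \<in> Sset r m k" and z: "cmod z \<le> 1/2" and w: "cmod w \<le> 1"
    and small: "cmod (P (\<sigma> # t) (z, w)) \<le> 2 * \<delta> (Suc k)"
  shows "cmod (P t (z, w) - \<sigma>) < \<delta> k / M k"
proof -
  have pos: "0 < \<delta> k / M k" using delta_pos[of k] M_ge_1[of k] by simp
  have "cmod (P t (z, w) - \<sigma>)^2 \<le> 43/100 * (\<delta> k / M k)^2"
    using tube_step_square[OF t z w order_refl] small by simp
  also have "\<dots> < (\<delta> k / M k)^2" using zero_less_power[OF pos, of 2] by linarith
  finally show ?thesis using pos by (rule power2_less_imp_less[OF _ less_imp_le])
qed

text \<open>Scaled version of the key estimate, used to control points with |w| > 1: the bound passes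
  from level k+1 to level k with the same factor u.\<close>
lemma tube_step_outer:
  assumes t: "t \<in> Sset r m k" and \<sigma>: "\<sigma> \<in> SigmaSet r m k"
    and z: "cmod z \<le> 1/2" and w: "cmod w \<le> u" and u: "1 \<le> u"
    and small: "cmod (P (\<sigma> # t) (z, w)) \<le> 2 * \<delta> (Suc k) * u"
  shows "cmod (P t (z, w)) \<le> \<delta> k * u"
proof -
  define y where "y = \<delta> k / M k"
  have y: "0 < y" "\<delta> k = y * M k"
    unfolding y_def using delta_pos[of k] M_ge_1[of k] by simp_all
  have "cmod (P t (z, w) - \<sigma>)^2 \<le> 43/100 * u * y^2"
    using tube_step_square[OF t z w u small] by (simp add: y_def)
  also have "\<dots> \<le> 4/9 * u * u * y^2"
  proof (rule mult_right_mono)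
    have "4/9 * u * 1 \<le> 4/9 * u * u" using u by (intro mult_left_mono) auto
    then show "43/100 * u \<le> 4/9 * u * u" using u by linarith
  qed simp
  also have "\<dots> = (2/3 * u * y)^2" by (simp add: power2_eq_square)
  finally have "cmod (P t (z, w) - \<sigma>)^2 \<le> (2/3 * u * y)^2" .
  from power2_le_imp_le[OF this] have near: "cmod (P t (z, w) - \<sigma>) \<le> 2/3 * u * y"
    using y(1) u by simp
  have "\<delta> k * (1 - 1 / M k) = \<delta> k - y" by (simp add: y_def right_diff_distrib)
  then have "cmod (P t (z, w)) \<le> (\<delta> k - y) + 2/3 * u * y"
    using Sigma_norm[OF \<sigma>] near norm_triangle_ineq[of \<sigma> "P t (z, w) - \<sigma>"] by simp
  also have "\<dots> \<le> \<delta> k * u"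
  proof -
    have "y * 1 \<le> y * M k" using y(1) M_ge_1[of k] by (intro mult_left_mono) auto
    then have "y \<le> \<delta> k" by (simp only: y(2) mult_1_right)
    then have "y * (u - 1) \<le> \<delta> k * (u - 1)" by (rule mult_right_mono) (use u in simp)
    moreover have "y * (u - 1) = u * y - y" "\<delta> k * (u - 1) = \<delta> k * u - \<delta> k"
      "2/3 * u * y = 2/3 * (u * y)" by (simp_all add: algebra_simps)
    moreover have "0 \<le> u * y" using u y(1) by simp
    ultimately show ?thesis by linarith
  qed
  finally show ?thesis .
qed

text \<open>Descending to level 0 (where P = w): a point of the closed disk in z with |P_{k,t}| \<le> \<delta>_k u
  has |w| \<le> u/2.\<close>
lemma descent_w_bound:
  "t \<in> Sset r m k \<Longrightarrow> cmod z \<le> 1/2 \<Longrightarrow> cmod w \<le> u \<Longrightarrow> 1 \<le> u \<Longrightarrow>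
   cmod (P t (z, w)) \<le> \<delta> k * u \<Longrightarrow> cmod w \<le> u / 2"
proof (induction k arbitrary: t)
  case (Suc k)
  then obtain \<sigma> t' where t: "t = \<sigma> # t'" "t' \<in> Sset r m k" "\<sigma> \<in> SigmaSet r m k" by auto
  have "0 \<le> \<delta> (Suc k) * u" using delta_pos[of "Suc k"] Suc.prems by simp
  then have "cmod (P (\<sigma> # t') (z, w)) \<le> 2 * \<delta> (Suc k) * u" using Suc.prems t by simp
  then have "cmod (P t' (z, w)) \<le> \<delta> k * u" using tube_step_outer[OF t(2,3)] Suc.prems by blast
  then show ?case using Suc.IH[OF t(2)] Suc.prems by blast
qed simp

text \<open>Points of a level set {P_{n,s} = \<alpha>}, |\<alpha>| < 2\<delta>_n, over the closed disk satisfy |w| \<le> 1/2,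
  even without assuming |w| < 1 beforehand.\<close>
lemma level_w_bound:
  assumes s: "s \<in> Sset r m n" and n: "1 \<le> n" and \<alpha>: "cmod \<alpha> < 2 * \<delta> n"
    and z: "cmod z \<le> 1/2" and eq: "P s (z, w) = \<alpha>"
  shows "cmod w \<le> 1/2"
proof -
  obtain k \<sigma> t where t: "n = Suc k" "s = \<sigma> # t" "t \<in> Sset r m k" "\<sigma> \<in> SigmaSet r m k"
    using s n by (cases n) auto
  define u where "u = max 1 (cmod w)"
  have u: "1 \<le> u" "cmod w \<le> u" by (auto simp: u_def)
  have "2 * \<delta> n \<le> 2 * \<delta> n * u" using delta_pos[of n] u by simp
  then have "cmod (P (\<sigma> # t) (z, w)) \<le> 2 * \<delta> (Suc k) * u" using eq \<alpha> t by simp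
  then have "cmod (P t (z, w)) \<le> \<delta> k * u" using tube_step_outer[OF t(3,4) z u(2) u(1)] by blast
  then have "cmod w \<le> u / 2" using descent_w_bound[OF t(3) z u(2) u(1)] by blast
  then show ?thesis unfolding u_def by (cases "cmod w \<le> 1") auto
qed

text \<open>A point of the closed bidisk lies in the 2\<delta>_k-tube of at most one index: the inner tubes
  around distinct lattice points are disjoint.\<close>
lemma tube_index_unique:
  "s1 \<in> Sset r m k \<Longrightarrow> s2 \<in> Sset r m k \<Longrightarrow> cmod z \<le> 1/2 \<Longrightarrow> cmod w \<le> 1 \<Longrightarrow>
   cmod (P s1 (z, w)) < 2 * \<delta> k \<Longrightarrow> cmod (P s2 (z, w)) < 2 * \<delta> k \<Longrightarrow> s1 = s2"
proof (induction k arbitrary: s1 s2)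
  case (Suc k)
  obtain \<sigma>1 t1 where t1: "s1 = \<sigma>1 # t1" "t1 \<in> Sset r m k" "\<sigma>1 \<in> SigmaSet r m k"
    using Suc.prems by auto
  obtain \<sigma>2 t2 where t2: "s2 = \<sigma>2 # t2" "t2 \<in> Sset r m k" "\<sigma>2 \<in> SigmaSet r m k"
    using Suc.prems by auto
  have small: "cmod (P (\<sigma>1 # t1) (z, w)) \<le> 2 * \<delta> (Suc k) * 1"
    "cmod (P (\<sigma>2 # t2) (z, w)) \<le> 2 * \<delta> (Suc k) * 1"
    using Suc.prems t1 t2 by simp_all
  have "cmod (P t1 (z, w)) \<le> \<delta> k * 1" "cmod (P t2 (z, w)) \<le> \<delta> k * 1"
    using tube_step_outer[OF t1(2,3) Suc.prems(3,4) order_refl small(1)]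
      tube_step_outer[OF t2(2,3) Suc.prems(3,4) order_refl small(2)] .
  then have "t1 = t2" using Suc.IH[OF t1(2) t2(2)] Suc.prems delta_pos[of k] by simp
  have near: "cmod (P t1 (z, w) - \<sigma>1) < \<delta> k / M k" "cmod (P t1 (z, w) - \<sigma>2) < \<delta> k / M k"
    using tube_step_inner[OF t1(2)] tube_step_inner[OF t2(2)] small Suc.prems \<open>t1 = t2\<close> by simp_all
  show ?case
  proof (rule ccontr)
    assume "s1 \<noteq> s2"
    then have "3 * \<delta> k / M k \<le> cmod (\<sigma>1 - \<sigma>2)"
      using Sigma_separated[OF t1(3) t2(3)] t1 t2 \<open>t1 = t2\<close> by simp
    also have "\<dots> \<le> cmod (P t1 (z, w) - \<sigma>1) + cmod (P t1 (z, w) - \<sigma>2)"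
      using norm_triangle_ineq4[of "P t1 (z, w) - \<sigma>2" "P t1 (z, w) - \<sigma>1"] by simp
    also have "\<dots> < 2 * (\<delta> k / M k)" using near by simp
    finally show False using delta_pos[of k] M_ge_1[of k] by (simp add: field_simps)
  qed
qed simp

lemma Omega_iff: "(z, w) \<in> Omega \<longleftrightarrow> cmod z < 1/2 \<and> cmod w < 1"
  by (simp add: Omega_def)

lemma closed_P_sublevel: "closed {p. cmod (P s p) \<le> c}"
  by (intro closed_Collect_le continuous_on_norm continuous_P continuous_on_const)

lemma open_Xs: "open (Xs a r m k s)"
proof -
  have "Xs a r m k s = Omega \<inter> {p. cmod (P s p) < \<delta> k}" by (auto simp: Xs_def)
  moreover have "open {p. cmod (P s p) < \<delta> k}"
    by (intro open_Collect_less continuous_on_norm continuous_P continuous_on_const)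
  ultimately show ?thesis by (auto simp: Omega_def open_Times)
qed

lemma closure_Xs_subset_Xint:
  assumes s: "s \<in> Sset r m n"
  shows "Omega \<inter> closure (Xs a r m (Suc n) (\<sigma> # s)) \<subseteq> Xint a r m n s \<sigma>"
proof
  fix p assume p: "p \<in> Omega \<inter> closure (Xs a r m (Suc n) (\<sigma> # s))"
  obtain z w where zw: "p = (z, w)" "cmod z < 1/2" "cmod w < 1"
    using p by (cases p) (auto simp: Omega_iff)
  have "closure (Xs a r m (Suc n) (\<sigma> # s)) \<subseteq> {p. cmod (P (\<sigma> # s) p) \<le> \<delta> (Suc n)}"
    by (rule closure_minimal) (auto simp: Xs_def closed_P_sublevel)
  then have "cmod (P (\<sigma> # s) (z, w)) \<le> 2 * \<delta> (Suc n)"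
    using p zw delta_pos[of "Suc n"] by force
  then have "cmod (P s (z, w) - \<sigma>) < \<delta> n / M n" using tube_step_inner[OF s] zw by simp
  then show "p \<in> Xint a r m n s \<sigma>" using p zw by (simp add: Xint_def)
qed

text \<open>... which lies in X_{n,s} because |\<sigma>| \<le> \<delta>_n (1 - 1/m_{n+1}).\<close>
lemma Xint_subset_Xs:
  assumes \<sigma>: "\<sigma> \<in> SigmaSet r m n"
  shows "Xint a r m n s \<sigma> \<subseteq> Xs a r m n s"
proof
  fix p assume p: "p \<in> Xint a r m n s \<sigma>"
  have "cmod (P s p) \<le> cmod \<sigma> + cmod (P s p - \<sigma>)"
    using norm_triangle_ineq[of \<sigma> "P s p - \<sigma>"] by simp
  also have "\<dots> < \<delta> n * (1 - 1 / M n) + \<delta> n / M n"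
    using Sigma_norm[OF \<sigma>] p by (simp add: Xint_def)
  also have "\<dots> = \<delta> n" by (simp add: algebra_simps)
  finally show "p \<in> Xs a r m n s" using p by (simp add: Xint_def Xs_def)
qed

text \<open>Part (i) for the whole tubes: a finite union of closures is the closure of the union.\<close>
lemma closure_Xn_subset_Xn: "Omega \<inter> closure (Xn a r m (Suc n)) \<subseteq> Xn a r m n"
proof -
  have cl: "closure (Xn a r m (Suc n)) \<subseteq> (\<Union>s'\<in>Sset r m (Suc n). closure (Xs a r m (Suc n) s'))"
  proof (rule closure_minimal)
    show "Xn a r m (Suc n) \<subseteq> (\<Union>s'\<in>Sset r m (Suc n). closure (Xs a r m (Suc n) s'))"
      unfolding Xn_def using closure_subset by blast
    show "closed (\<Union>s'\<in>Sset r m (Suc n). closure (Xs a r m (Suc n) s'))"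
      by (intro closed_UN finite_Sset ballI closed_closure)
  qed
  show ?thesis
  proof
    fix p assume p: "p \<in> Omega \<inter> closure (Xn a r m (Suc n))"
    then obtain s' where s': "s' \<in> Sset r m (Suc n)" "p \<in> closure (Xs a r m (Suc n) s')"
      using cl by blast
    then obtain \<sigma> s where s: "s' = \<sigma> # s" "s \<in> Sset r m n" "\<sigma> \<in> SigmaSet r m n" by auto
    then have "p \<in> Xint a r m n s \<sigma>" using closure_Xs_subset_Xint[OF s(2)] p s' by blast
    then show "p \<in> Xn a r m n" using Xint_subset_Xs[OF s(3)] s(2) unfolding Xn_def by blast
  qed
qed

lemma Xs_disjoint:
  assumes "s1 \<in> Sset r m k" "s2 \<in> Sset r m k" "s1 \<noteq> s2"
  shows "Xs a r m k s1 \<inter> Xs a r m k s2 = {}"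
proof (rule ccontr)
  assume "Xs a r m k s1 \<inter> Xs a r m k s2 \<noteq> {}"
  then obtain z w where zw: "(z, w) \<in> Xs a r m k s1" "(z, w) \<in> Xs a r m k s2" by auto
  then have "cmod z \<le> 1/2" "cmod w \<le> 1"
    "cmod (P s1 (z, w)) < 2 * \<delta> k" "cmod (P s2 (z, w)) < 2 * \<delta> k"
    using delta_pos[of k] by (auto simp: Xs_def Omega_iff)
  then show False using tube_index_unique[OF assms(1,2)] assms(3) by blast
qed

text \<open>The tubes X_{k,s} are open and pairwise disjoint, so a connected subset of X_k lies in one.\<close>
lemma connected_in_one_tube:
  assumes "connected S" "S \<subseteq> Xn a r m k" "p \<in> S"
  obtains s where "s \<in> Sset r m k" "S \<subseteq> Xs a r m k s"
proof -
  obtain s where s: "s \<in> Sset r m k" "p \<in> Xs a r m k s" using assms(2,3) by (auto simp: Xn_def)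
  define rest where "rest = (\<Union>s'\<in>Sset r m k - {s}. Xs a r m k s')"
  have "S \<subseteq> Xs a r m k s \<union> rest" using assms(2) by (auto simp: Xn_def rest_def)
  moreover have "Xs a r m k s \<inter> rest \<inter> S = {}" using Xs_disjoint[OF s(1)] by (auto simp: rest_def)
  moreover have "Xs a r m k s \<inter> S \<noteq> {}" using s assms(3) by auto
  moreover have "open rest" unfolding rest_def using open_Xs by blast
  ultimately have "rest \<inter> S = {}" using connectedD[OF assms(1) open_Xs] by blast
  then show ?thesis using \<open>S \<subseteq> Xs a r m k s \<union> rest\<close> s(1) that by blast
qed

text \<open>Its image stays in one tube X_{n+1,(t,\<sigma>)}, where
  \<zeta> \<mapsto> P_{n,t}(g \<zeta>) - \<sigma> is a continuous approximate square root of \<epsilon>_{n+1} (\<zeta> - a_{n+1}).\<close>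
lemma no_section_over_disk:
  fixes g :: "complex \<Rightarrow> complex \<times> complex"
  assumes cont: "continuous_on (ball (a (Suc n)) (r (Suc n))) g"
    and inX: "\<And>\<zeta>. \<zeta> \<in> ball (a (Suc n)) (r (Suc n)) \<Longrightarrow> g \<zeta> \<in> Xn a r m (Suc n)"
    and A_eq: "\<And>\<zeta>. Afun a (Suc n) (g \<zeta>) = \<zeta> - a (Suc n)"
  shows False
proof -
  define B where "B = ball (a (Suc n)) (r (Suc n))"
  have "connected (g ` B)" unfolding B_def using cont by (intro connected_continuous_image) auto
  moreover have "g ` B \<subseteq> Xn a r m (Suc n)" using inX by (auto simp: B_def)
  moreover have "g (a (Suc n)) \<in> g ` B" using r_pos[of n] by (simp add: B_def)
  ultimately obtain s where s: "s \<in> Sset r m (Suc n)" "g ` B \<subseteq> Xs a r m (Suc n) s"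
    by (rule connected_in_one_tube)
  then obtain \<sigma> t where st: "s = \<sigma> # t" "t \<in> Sset r m n" by auto
  define G where "G \<zeta> = P t (g \<zeta>) - \<sigma>" for \<zeta>
  have "continuous_on B G"
    unfolding G_def B_def using cont
    by (intro continuous_intros continuous_on_compose2[OF continuous_P, of _ g]) auto
  moreover have "cmod (G \<zeta> ^ 2 - complex_of_real (\<epsilon> (Suc n)) * (\<zeta> - a (Suc n)))
                   < \<epsilon> (Suc n) * r (Suc n) / 2" if "\<zeta> \<in> B" for \<zeta>
    using s that P_Cons[OF st(2), of \<sigma> "g \<zeta>"] A_eq[of \<zeta>] two_delta_Suc[of n]
    by (force simp: G_def st(1) Xs_def)
  ultimately show False
    unfolding B_def by (rule no_approximate_sqrt_on_disk[OF eps_pos[of n] r_pos[of n]])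
qed

lemma no_graph_over_z:
  assumes "even n"
  shows "\<not> (\<exists>f. continuous_on (ball (a (Suc n)) (r (Suc n))) f \<and>
             (\<forall>\<zeta>\<in>ball (a (Suc n)) (r (Suc n)). (\<zeta>, f \<zeta>) \<in> Xn a r m (Suc n)))"
proof
  assume "\<exists>f. continuous_on (ball (a (Suc n)) (r (Suc n))) f \<and>
             (\<forall>\<zeta>\<in>ball (a (Suc n)) (r (Suc n)). (\<zeta>, f \<zeta>) \<in> Xn a r m (Suc n))"
  then obtain f where "continuous_on (ball (a (Suc n)) (r (Suc n))) f"
    "\<forall>\<zeta>\<in>ball (a (Suc n)) (r (Suc n)). (\<zeta>, f \<zeta>) \<in> Xn a r m (Suc n)" by blast
  then show False
    using assms by (intro no_section_over_disk[of n "\<lambda>\<zeta>. (\<zeta>, f \<zeta>)"])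
      (auto intro!: continuous_intros simp: Afun_def)
qed

lemma no_graph_over_z_plus_w:
  assumes "odd n"
  shows "\<not> (\<exists>f. continuous_on (ball (a (Suc n)) (r (Suc n))) f \<and>
             (\<forall>\<zeta>\<in>ball (a (Suc n)) (r (Suc n)). (\<zeta> - f \<zeta> / 100, f \<zeta>) \<in> Xn a r m (Suc n)))"
proof
  assume "\<exists>f. continuous_on (ball (a (Suc n)) (r (Suc n))) f \<and>
             (\<forall>\<zeta>\<in>ball (a (Suc n)) (r (Suc n)). (\<zeta> - f \<zeta> / 100, f \<zeta>) \<in> Xn a r m (Suc n))"
  then obtain f where "continuous_on (ball (a (Suc n)) (r (Suc n))) f"
    "\<forall>\<zeta>\<in>ball (a (Suc n)) (r (Suc n)). (\<zeta> - f \<zeta> / 100, f \<zeta>) \<in> Xn a r m (Suc n)" by blast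
  then show False
    using assms by (intro no_section_over_disk[of n "\<lambda>\<zeta>. (\<zeta> - f \<zeta> / 100, f \<zeta>)"])
      (auto intro!: continuous_intros simp: Afun_def)
qed

lemma horizontal_Level:
  assumes "s \<in> Sset r m n" "1 \<le> n" "cmod \<alpha> < 2 * \<delta> n"
  shows "horizontal (Level a r m s \<alpha>)"
  unfolding horizontal_def
proof (intro exI[of _ "1/4"] conjI subsetI)
  fix p assume p: "p \<in> Level a r m s \<alpha>"
  then obtain z w where "p = (z, w)" "cmod z < 1/2" "P s (z, w) = \<alpha>"
    by (cases p) (auto simp: Level_def Omega_iff)
  then show "p \<in> ball 0 (1/2) \<times> ball 0 (1 - 1/4)" using level_w_bound[OF assms, of z w] by simp
qed simp

lemma Level_disjoint:
  assumes "s1 \<in> Sset r m n" "s2 \<in> Sset r m n" "cmod \<alpha> < 2 * \<delta> n" "s1 \<noteq> s2"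
  shows "Level a r m s1 \<alpha> \<inter> Level a r m s2 \<alpha> = {}"
  using tube_index_unique[OF assms(1,2)] assms(3,4) by (force simp: Level_def Omega_def)

text \<open>For fixed z, P_{n,s}(z, \<cdot>) as a polynomial in w; and the same objects with coefficients
  polynomial in z, needed to express the discriminant as a polynomial in z.\<close>
definition A_poly :: "complex \<Rightarrow> nat \<Rightarrow> complex poly" where
  "A_poly z k = (if odd k then [:z - a k:] else [:z - a k, 1/100:])"

fun P_poly :: "complex \<Rightarrow> complex list \<Rightarrow> complex poly" where
  "P_poly z [] = [:0, 1:]"
| "P_poly z (\<sigma> # s) = (P_poly z s - [:\<sigma>:])^2
     - Polynomial.smult (complex_of_real (\<epsilon> (Suc (length s)))) (A_poly z (Suc (length s)))"

definition A_bipoly :: "nat \<Rightarrow> complex poly poly" where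
  "A_bipoly k = (if odd k then [:[:- a k, 1:]:] else [:[:- a k, 1:], [:1/100:]:])"

fun P_bipoly :: "complex list \<Rightarrow> complex poly poly" where
  "P_bipoly [] = [:0, 1:]"
| "P_bipoly (\<sigma> # s) = (P_bipoly s - [:[:\<sigma>:]:])^2
     - Polynomial.smult [:complex_of_real (\<epsilon> (Suc (length s))):] (A_bipoly (Suc (length s)))"

definition level_poly :: "complex \<Rightarrow> complex list \<Rightarrow> complex \<Rightarrow> complex poly" where
  "level_poly z s \<alpha> = P_poly z s - [:\<alpha>:]"

definition level_bipoly :: "complex list \<Rightarrow> complex \<Rightarrow> complex poly poly" where
  "level_bipoly s \<alpha> = P_bipoly s - [:[:\<alpha>:]:]"

definition discriminant :: "complex list \<Rightarrow> complex \<Rightarrow> complex poly" where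
  "discriminant s \<alpha> = resultant (level_bipoly s \<alpha>) (pderiv (level_bipoly s \<alpha>))"

lemma poly_P_poly: "poly (P_poly z s) w = P s (z, w)"
  by (induction s) (auto simp: Pfun.simps(2) A_poly_def Afun_def algebra_simps)

lemma poly_level_poly: "poly (level_poly z s \<alpha>) w = P s (z, w) - \<alpha>"
  by (simp add: level_poly_def poly_P_poly)

lemma map_level_bipoly: "map_poly (\<lambda>c. poly c z) (level_bipoly s \<alpha>) = level_poly z s \<alpha>"
proof -
  interpret h: map_poly_comm_ring_hom "\<lambda>c. poly c z" ..
  have "map_poly (\<lambda>c. poly c z) (A_bipoly k) = A_poly z k" for k
    by (simp add: A_bipoly_def A_poly_def)
  then have "map_poly (\<lambda>c. poly c z) (P_bipoly s) = P_poly z s"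
    by (induction s) (simp_all add: hom_distribs)
  then show ?thesis by (simp add: level_bipoly_def level_poly_def hom_distribs)
qed

lemma P_poly_monic: "degree (P_poly z s) = 2 ^ length s \<and> lead_coeff (P_poly z s) = 1"
proof (induction s)
  case (Cons \<sigma> s)
  have "degree (Polynomial.smult (complex_of_real (\<epsilon> (Suc (length s)))) (A_poly z (Suc (length s)))) \<le> 1"
    by (rule order_trans[OF degree_smult_le]) (simp add: A_poly_def)
  from monic_shifted_square_minus[OF conjunct1[OF Cons] _ conjunct2[OF Cons] this, of \<sigma>]
  show ?case by (simp only: P_poly.simps length_Cons power_Suc one_le_power, simp)
qed simp

lemma P_bipoly_monic: "degree (P_bipoly s) = 2 ^ length s \<and> lead_coeff (P_bipoly s) = 1"
proof (induction s)
  case (Cons \<sigma> s)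
  have "degree (Polynomial.smult [:complex_of_real (\<epsilon> (Suc (length s))):] (A_bipoly (Suc (length s)))) \<le> 1"
    by (rule order_trans[OF degree_smult_le]) (simp add: A_bipoly_def)
  from monic_shifted_square_minus[OF conjunct1[OF Cons] _ conjunct2[OF Cons] this, of "[:\<sigma>:]"]
  show ?case by (simp only: P_bipoly.simps length_Cons power_Suc one_le_power, simp)
qed simp

lemma level_poly_monic:
  shows "degree (level_poly z s \<alpha>) = 2 ^ length s" "lead_coeff (level_poly z s \<alpha>) = 1"
proof -
  have P: "degree (P_poly z s) = 2 ^ length s" "lead_coeff (P_poly z s) = 1"
    using P_poly_monic[of z s] by blast+
  then have "0 < degree (P_poly z s)" by simp
  note minus = minus_const_degree_lead_coeff[OF this, of \<alpha>]
  show "degree (level_poly z s \<alpha>) = 2 ^ length s" unfolding level_poly_def minus(1) by (rule P(1))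
  show "lead_coeff (level_poly z s \<alpha>) = 1" unfolding level_poly_def minus(2) by (rule P(2))
qed

lemma level_poly_nonzero: "level_poly z s \<alpha> \<noteq> 0"
proof
  assume "level_poly z s \<alpha> = 0"
  then show False using level_poly_monic(2)[of z s \<alpha>] by simp
qed

lemma degree_level_bipoly: "degree (level_bipoly s \<alpha>) = 2 ^ length s"
proof -
  have P: "degree (P_bipoly s) = 2 ^ length s" using P_bipoly_monic by blast
  then have "0 < degree (P_bipoly s)" by simp
  show ?thesis unfolding level_bipoly_def minus_const_degree_lead_coeff(1)[OF \<open>0 < degree (P_bipoly s)\<close>]
    by (rule P)
qed

text \<open>Evaluating the coefficients at z commutes with forming the discriminant, since the
  (monic) degree does not drop.\<close>
lemma poly_discriminant:
  "poly (discriminant s \<alpha>) z = resultant (level_poly z s \<alpha>) (pderiv (level_poly z s \<alpha>))"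
proof -
  have d1: "degree (map_poly (\<lambda>c. poly c z) (level_bipoly s \<alpha>)) = degree (level_bipoly s \<alpha>)"
    using map_level_bipoly level_poly_monic(1) degree_level_bipoly by simp
  have d2: "degree (map_poly (\<lambda>c. poly c z) (pderiv (level_bipoly s \<alpha>)))
               = degree (pderiv (level_bipoly s \<alpha>))"
    using d1 by (simp add: poly_hom.map_poly_pderiv degree_pderiv)
  show ?thesis using poly_hom.resultant_map_poly[OF d1 d2]
    by (simp add: discriminant_def poly_hom.map_poly_pderiv map_level_bipoly)
qed

text \<open>Over the open disk, the fibre of a level set is exactly the zero set of level_poly:
  the constraint |w| < 1 is automatic by level_w_bound.\<close>
lemma fibre_Level:
  assumes "s \<in> Sset r m n" "1 \<le> n" "cmod \<alpha> < 2 * \<delta> n" and z: "cmod z < 1/2"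
  shows "fibre (Level a r m s \<alpha>) z = {w. poly (level_poly z s \<alpha>) w = 0}"
  using level_w_bound[OF assms(1-3), of z] z
  by (force simp: fibre_def Level_def Omega_iff poly_level_poly)

lemma pderiv_P_poly_Cons:
  "poly (pderiv (P_poly z (\<sigma> # t))) w =
     2 * (P t (z, w) - \<sigma>) * poly (pderiv (P_poly z t)) w
     - complex_of_real (\<epsilon> (Suc (length t))) * (if odd (Suc (length t)) then 0 else 1/100)"
  by (simp add: pderiv_power pderiv_diff pderiv_smult A_poly_def poly_P_poly pderiv_pCons)

text \<open>Over the annulus, where |A_{k+1}| \<ge> 3/25 > r_{k+1}, a point of the 2\<delta>_{k+1}-tube around
  (t,\<sigma>) is not too close to the centre: |P_{k,t} - \<sigma>| \<ge> \<delta>_k / (10 m_{k+1}).\<close>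
lemma tube_step_annulus_lower:
  assumes t: "t \<in> Sset r m k" and z: "3/8 \<le> cmod z" and w: "cmod w \<le> 1/2"
    and small: "cmod (P (\<sigma> # t) (z, w)) < 2 * \<delta> (Suc k)"
  shows "\<delta> k / M k / 10 \<le> cmod (P t (z, w) - \<sigma>)"
proof -
  define e where "e = \<epsilon> (Suc k)"
  define A where "A = Afun a (Suc k) (z, w)"
  have e: "0 < e" using eps_pos by (simp add: e_def)
  have eq: "complex_of_real e * A = (P t (z, w) - \<sigma>)^2 - P (\<sigma> # t) (z, w)"
    using P_Cons[OF t] by (simp add: e_def A_def)
  have "e * (3/25) \<le> e * cmod A"
    using A_lower[of "Suc k" z w] z w e by (simp add: A_def)
  also have "e * cmod A = cmod (complex_of_real e * A)" using e by (simp add: norm_mult)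
  also have "\<dots> \<le> cmod (P t (z, w) - \<sigma>)^2 + cmod (P (\<sigma> # t) (z, w))"
    unfolding eq using norm_triangle_ineq4[of "(P t (z, w) - \<sigma>)^2" "P (\<sigma> # t) (z, w)"]
    by (simp add: norm_power)
  finally have lower: "e * (3/25) \<le> cmod (P t (z, w) - \<sigma>)^2 + cmod (P (\<sigma> # t) (z, w))" .
  have "e * r (Suc k) \<le> e * (1/10)" using r_le[of k] e by (intro mult_left_mono) auto
  moreover have "2 * \<delta> (Suc k) = e * r (Suc k)" by (simp add: e_def two_delta_Suc)
  moreover have "(\<delta> k / M k / 10)^2 = e / 50"
    using M_ge_1[of k] by (simp add: e_def eps_Suc power_divide)
  ultimately have "(\<delta> k / M k / 10)^2 \<le> cmod (P t (z, w) - \<sigma>)^2"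
    using lower small by linarith
  then show ?thesis by (rule power2_le_imp_le) simp
qed

text \<open>Over the annulus the w-derivative of P_{k,t} is bounded below on the 2\<delta>_k-tube, by
  induction on k: the derivative of (P_{k,t} - \<sigma>)^2 is 2 (P_{k,t} - \<sigma>) P'_{k,t}, and the
  contribution of \<epsilon>_{k+1} A_{k+1} is of lower order.\<close>
lemma pderiv_lower_bound:
  "t \<in> Sset r m k \<Longrightarrow> 3/8 \<le> cmod z \<Longrightarrow> cmod z \<le> 1/2 \<Longrightarrow> cmod w \<le> 1/2 \<Longrightarrow>
   cmod (P t (z, w)) < 2 * \<delta> k \<Longrightarrow> \<delta> k / 20 \<le> cmod (poly (pderiv (P_poly z t)) w)"
proof (induction k arbitrary: t)
  case 0
  then show ?case by (simp add: pderiv_pCons)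
next
  case (Suc k)
  obtain \<sigma> t' where t: "t = \<sigma> # t'" "t' \<in> Sset r m k" "\<sigma> \<in> SigmaSet r m k"
    using Suc.prems by auto
  define x where "x = P t' (z, w) - \<sigma>"
  define D where "D = poly (pderiv (P_poly z t')) w"
  define c where "c = complex_of_real (\<epsilon> (Suc k)) * (if odd (Suc k) then 0 else 1/100)"
  define y where "y = \<delta> k / M k"
  have y: "0 < y" "y \<le> \<delta> k" "\<epsilon> (Suc k) = y^2 / 2"
    using delta_pos[of k] M_ge_1[of k]
    by (simp_all add: y_def eps_Suc power_divide divide_le_eq_1 field_simps)
  have small: "cmod (P (\<sigma> # t') (z, w)) < 2 * \<delta> (Suc k)" using Suc.prems t by simp
  then have "cmod (P t' (z, w)) \<le> \<delta> k * 1"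
    using tube_step_outer[OF t(2,3), of z w 1] Suc.prems by simp
  then have IH: "\<delta> k / 20 \<le> cmod D"
    using Suc.IH[OF t(2)] Suc.prems delta_pos[of k] by (simp add: D_def)
  have x: "y / 10 \<le> cmod x"
    using tube_step_annulus_lower[OF t(2) _ _ small] Suc.prems by (simp add: x_def y_def)
  have "poly (pderiv (P_poly z (\<sigma> # t'))) w = 2 * x * D - c"
    using pderiv_P_poly_Cons[of z \<sigma> t' w] Sset_length[OF t(2)] by (simp add: x_def D_def c_def)
  then have "2 * (cmod x * cmod D) - cmod c \<le> cmod (poly (pderiv (P_poly z t)) w)"
    using norm_triangle_ineq2[of "2 * x * D" c] t(1) by (simp add: norm_mult)
  moreover have "(y / 10) * (y / 20) \<le> cmod x * cmod D"
    by (rule mult_mono) (use x IH y in auto)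
  moreover have "cmod c \<le> y^2 / 200"
    using y eps_pos[of k] by (simp add: c_def norm_mult)
  moreover have "\<epsilon> (Suc k) * r (Suc k) \<le> \<epsilon> (Suc k) * (1/10)"
    using r_le[of k] eps_pos[of k] by (intro mult_left_mono) auto
  moreover have "(y / 10) * (y / 20) = y^2 / 200" by (simp add: power2_eq_square)
  moreover have "0 \<le> y^2" by simp
  ultimately show ?case using two_delta_Suc[of k] y(3) by linarith
qed

lemma level_poly_rsquarefree:
  assumes s: "s \<in> Sset r m n" and n: "1 \<le> n" and \<alpha>: "cmod \<alpha> < 2 * \<delta> n"
    and z: "3/8 \<le> cmod z" "cmod z < 1/2"
  shows "rsquarefree (level_poly z s \<alpha>)"
  unfolding rsquarefree_roots
proof (intro allI notI)
  fix w assume w: "poly (level_poly z s \<alpha>) w = 0 \<and> poly (pderiv (level_poly z s \<alpha>)) w = 0"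
  then have eq: "P s (z, w) = \<alpha>" by (simp add: poly_level_poly)
  have "cmod w \<le> 1/2" using level_w_bound[OF s n \<alpha> _ eq] z by simp
  then have "\<delta> n / 20 \<le> cmod (poly (pderiv (P_poly z s)) w)"
    using pderiv_lower_bound[OF s z(1)] z eq \<alpha> by simp
  then show False using w delta_pos[of n] by (simp add: level_poly_def pderiv_diff)
qed

lemma card_fibre_annulus:
  assumes s: "s \<in> Sset r m n" and n: "1 \<le> n" and \<alpha>: "cmod \<alpha> < 2 * \<delta> n"
    and z: "3/8 \<le> cmod z" "cmod z < 1/2"
  shows "card (fibre (Level a r m s \<alpha>) z) = 2 ^ n"
  using fibre_Level[OF s n \<alpha> z(2)] card_roots_rsquarefree[OF level_poly_rsquarefree[OF assms]]
    level_poly_monic(1) Sset_length[OF s] by simp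

text \<open>Fibres are root sets of a polynomial of
  degree 2^n, with exactly 2^n points off the finite zero set of the discriminant; the
  discriminant is a nonzero polynomial because the roots are simple at z = 2/5.\<close>
lemma degree_over_z_Level:
  assumes s: "s \<in> Sset r m n" and n: "1 \<le> n" and \<alpha>: "cmod \<alpha> < 2 * \<delta> n"
  shows "degree_over_z (Level a r m s \<alpha>) (2 ^ n)"
proof -
  have deg: "degree (level_poly z s \<alpha>) = 2 ^ n" for z
    using level_poly_monic(1) Sset_length[OF s] by simp
  have simple_iff: "poly (discriminant s \<alpha>) z \<noteq> 0 \<longleftrightarrow> rsquarefree (level_poly z s \<alpha>)" for z
    using poly_discriminant resultant_pderiv_nonzero_iff_rsquarefree[OF level_poly_nonzero] by simp
  define E where "E = {z. poly (discriminant s \<alpha>) z = 0}"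
  have "poly (discriminant s \<alpha>) (2/5) \<noteq> 0"
    using simple_iff level_poly_rsquarefree[OF s n \<alpha>, of "2/5"] by simp
  then have "finite E" unfolding E_def by (intro poly_roots_finite) auto
  have "\<exists>e>0. ball z e \<inter> E \<subseteq> {z}" for z
  proof -
    obtain e where "0 < e" "\<forall>x\<in>E. x \<noteq> z \<longrightarrow> e \<le> dist z x"
      using finite_set_avoid[OF \<open>finite E\<close>] by blast
    then show ?thesis by (intro exI[of _ e]) auto
  qed
  moreover have "finite (fibre (Level a r m s \<alpha>) z) \<and> card (fibre (Level a r m s \<alpha>) z) \<le> 2 ^ n"
    if "z \<in> ball 0 (1/2)" for z
  proof -
    have "fibre (Level a r m s \<alpha>) z = {w. poly (level_poly z s \<alpha>) w = 0}"
      using that fibre_Level[OF s n \<alpha>] by simp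
    then show ?thesis
      using poly_roots_finite[OF level_poly_nonzero[of z s \<alpha>]]
        card_poly_roots_bound[OF level_poly_nonzero[of z s \<alpha>]] deg[of z] by simp
  qed
  moreover have "card (fibre (Level a r m s \<alpha>) z) = 2 ^ n" if "z \<in> ball 0 (1/2) - E" for z
    using that fibre_Level[OF s n \<alpha>] simple_iff card_roots_rsquarefree deg by (simp add: E_def)
  ultimately show ?thesis unfolding degree_over_z_def by blast
qed

text \<open>Part (iii): over the annulus the level set is a covering, as the zero set of a continuous
  monic family with the constant number 2^n of roots.\<close>
lemma covering_Level:
  assumes s: "s \<in> Sset r m n" and n: "1 \<le> n" and \<alpha>: "cmod \<alpha> < 2 * \<delta> n"
  shows "covering_space (Level a r m s \<alpha> \<inter> ({z. 3/8 \<le> cmod z} \<times> UNIV)) fst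
           {z. 3/8 \<le> cmod z \<and> cmod z < 1/2}"
proof -
  define K where "K = {z. 3/8 \<le> cmod z \<and> cmod z < 1/2}"
  have "Level a r m s \<alpha> \<inter> ({z. 3/8 \<le> cmod z} \<times> UNIV)
          = {(z, w). z \<in> K \<and> poly (level_poly z s \<alpha>) w = 0}"
  proof (intro equalityI subsetI)
    fix p assume "p \<in> Level a r m s \<alpha> \<inter> ({z. 3/8 \<le> cmod z} \<times> UNIV)"
    then show "p \<in> {(z, w). z \<in> K \<and> poly (level_poly z s \<alpha>) w = 0}"
      by (cases p) (auto simp: K_def Level_def Omega_iff poly_level_poly)
  next
    fix p assume "p \<in> {(z, w). z \<in> K \<and> poly (level_poly z s \<alpha>) w = 0}"
    then obtain z w where p: "p = (z, w)" "z \<in> K" "poly (level_poly z s \<alpha>) w = 0" by auto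
    then have "w \<in> fibre (Level a r m s \<alpha>) z" using fibre_Level[OF s n \<alpha>, of z] by (simp add: K_def)
    then show "p \<in> Level a r m s \<alpha> \<inter> ({z. 3/8 \<le> cmod z} \<times> UNIV)"
      using p by (simp add: fibre_def K_def)
  qed
  moreover have "covering_space {(z, w). z \<in> K \<and> poly (level_poly z s \<alpha>) w = 0} fst K"
  proof (rule covering_space_monic_roots[where d = "2 ^ n"])
    show "lead_coeff (level_poly z s \<alpha>) = 1" "degree (level_poly z s \<alpha>) = 2 ^ n" for z
      using level_poly_monic[of z s \<alpha>] Sset_length[OF s] by simp_all
    show "continuous_on UNIV (\<lambda>z. poly (level_poly z s \<alpha>) w)" for w
      unfolding poly_level_poly
      by (intro continuous_intros continuous_on_compose2[OF continuous_P]) auto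
    show "card {w. poly (level_poly z s \<alpha>) w = 0} = 2 ^ n" if "z \<in> K" for z
      using card_fibre_annulus[OF s n \<alpha>] fibre_Level[OF s n \<alpha>] that by (simp add: K_def)
  qed simp
  ultimately show ?thesis by (simp add: K_def)
qed

end

theorem lemma1:
  fixes a :: "nat \<Rightarrow> complex" and r :: "nat \<Rightarrow> real" and m :: "nat \<Rightarrow> nat" and n :: nat
  assumes "construction a r m" and "n \<ge> 1"
  shows
   \<comment> \<open>(i)\<close>
   "Omega \<inter> closure (Xn a r m (Suc n)) \<subseteq> Xn a r m n
    \<and> (\<forall>s \<sigma>. s \<in> Sset r m n \<and> \<sigma> \<in> SigmaSet r m n \<longrightarrow>
          Omega \<inter> closure (Xs a r m (Suc n) (\<sigma> # s)) \<subseteq> Xint a r m n s \<sigma>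
          \<and> Xint a r m n s \<sigma> \<subseteq> Xs a r m n s)
    \<comment> \<open>(ii)\<close>
    \<and> (even n \<longrightarrow> \<not> (\<exists>f. continuous_on (ball (a (Suc n)) (r (Suc n))) f \<and>
          (\<forall>\<zeta>\<in>ball (a (Suc n)) (r (Suc n)). (\<zeta>, f \<zeta>) \<in> Xn a r m (Suc n))))
    \<and> (odd n \<longrightarrow> \<not> (\<exists>f. continuous_on (ball (a (Suc n)) (r (Suc n))) f \<and>
          (\<forall>\<zeta>\<in>ball (a (Suc n)) (r (Suc n)). (\<zeta> - f \<zeta> / 100, f \<zeta>) \<in> Xn a r m (Suc n))))
    \<comment> \<open>(iii)\<close>
    \<and> (\<forall>s\<in>Sset r m n. \<forall>\<alpha>::complex. cmod \<alpha> < 2 * delta r m n \<longrightarrow>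
          horizontal (Level a r m s \<alpha>)
          \<and> degree_over_z (Level a r m s \<alpha>) (2^n)
          \<and> covering_space (Level a r m s \<alpha> \<inter> ({z. 3/8 \<le> cmod z} \<times> UNIV)) fst
                           {z. 3/8 \<le> cmod z \<and> cmod z < 1/2}
          \<and> (\<forall>z. 3/8 \<le> cmod z \<and> cmod z < 1/2 \<longrightarrow> card (fibre (Level a r m s \<alpha>) z) = 2^n))
    \<and> (\<forall>s1\<in>Sset r m n. \<forall>s2\<in>Sset r m n. \<forall>\<alpha>::complex. cmod \<alpha> < 2 * delta r m n \<and> s1 \<noteq> s2 \<longrightarrow>
          Level a r m s1 \<alpha> \<inter> Level a r m s2 \<alpha> = {})"
proof -
  interpret tube_construction a r m by unfold_locales (rule assms(1))
  have n: "1 \<le> n" using assms(2) by simp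
  show ?thesis
  proof (intro conjI allI impI ballI)
    show "Omega \<inter> closure (Xn a r m (Suc n)) \<subseteq> Xn a r m n" by (rule closure_Xn_subset_Xn)
  next
    fix s \<sigma> assume "s \<in> Sset r m n \<and> \<sigma> \<in> SigmaSet r m n"
    then show "Omega \<inter> closure (Xs a r m (Suc n) (\<sigma> # s)) \<subseteq> Xint a r m n s \<sigma>"
      and "Xint a r m n s \<sigma> \<subseteq> Xs a r m n s"
      using closure_Xs_subset_Xint Xint_subset_Xs by auto
  next
    fix s \<alpha> assume s: "s \<in> Sset r m n" and \<alpha>: "cmod \<alpha> < 2 * delta r m n"
    show "horizontal (Level a r m s \<alpha>)" by (rule horizontal_Level[OF s n \<alpha>])
    show "degree_over_z (Level a r m s \<alpha>) (2 ^ n)" by (rule degree_over_z_Level[OF s n \<alpha>])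
    show "covering_space (Level a r m s \<alpha> \<inter> ({z. 3/8 \<le> cmod z} \<times> UNIV)) fst
            {z. 3/8 \<le> cmod z \<and> cmod z < 1/2}" by (rule covering_Level[OF s n \<alpha>])
    show "card (fibre (Level a r m s \<alpha>) z) = 2 ^ n" if "3/8 \<le> cmod z \<and> cmod z < 1/2" for z
      using card_fibre_annulus[OF s n \<alpha>] that by blast
  next
    fix s1 s2 \<alpha> assume "s1 \<in> Sset r m n" "s2 \<in> Sset r m n"
      and "cmod \<alpha> < 2 * delta r m n \<and> s1 \<noteq> s2"
    then show "Level a r m s1 \<alpha> \<inter> Level a r m s2 \<alpha> = {}" using Level_disjoint by blast
  qed (use no_graph_over_z no_graph_over_z_plus_w in blast)+
qed

end
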